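(* Let $U\subset \mathbb R^n$ and $V\subset \mathbb R^m$ be open and let $f:U\times V\to \mathbb R$ be upper-semicontinuous and bounded. Suppose $f$ is $\kappa$-semiconcave for some $\kappa>0$, i.e. $(x,y)\mapsto f(x,y)-\frac\kappa2(\|x\|^2+\|y\|^2)$ is concave. Then for every $0<\epsilon<\kappa^{-1}$ and every fixed $x\in U$, the function $y\mapsto f^{\epsilon,p}(x,y)-\frac{\kappa}{2} \|y\|^2$ is concave on $V$, where $f^{\epsilon,p}(x,y)= \sup_{z\in U} \{ f(z,y) - \frac{1}{2\epsilon} \| z-x\|^2\}$. *)

theory Defs
  imports "HOL-Analysis.Analysis"
begin

definition upper_semicontinuous_on :: "'a::topological_space set \<Rightarrow> ('a \<Rightarrow> real) \<Rightarrow> bool" where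
  "upper_semicontinuous_on S f \<longleftrightarrow>
     (\<forall>p\<in>S. \<forall>e>0. eventually (\<lambda>q. f q < f p + e) (at p within S))"

definition sup_conv_fst ::
  "real \<Rightarrow> 'a::real_normed_vector set \<Rightarrow> ('a \<times> 'b \<Rightarrow> real) \<Rightarrow> 'a \<Rightarrow> 'b \<Rightarrow> real" where
  "sup_conv_fst eps U f x y = (SUP z\<in>U. f (z, y) - (norm (z - x))\<^sup>2 / (2 * eps))"

end

theory Submission
  imports Defs
begin

text \<open>Up to the term \<open>-\<kappa>/2 \<parallel>y\<parallel>\<^sup>2\<close>, the function maximised in the sup-convolution is
  \<open>(z, y) \<mapsto> [f(z,y) - \<kappa>/2 (\<parallel>z\<parallel>\<^sup>2 + \<parallel>y\<parallel>\<^sup>2)] + [\<kappa>/2 \<parallel>z\<parallel>\<^sup>2 - \<parallel>z - x\<parallel>\<^sup>2/(2\<epsilon>)]\<close>,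
  a sum of two jointly concave functions: the first by semiconcavity, the second because
  \<open>1/(2\<epsilon>) \<ge> \<kappa>/2\<close>. Maximising a jointly concave function over one variable gives a concave
  function of the other, provided the supremum is finite, which boundedness of \<open>f\<close> ensures.\<close>

lemma power2_norm_convex_combination:
  fixes a b :: "'a::real_inner"
  assumes "u + v = 1"
  shows "u * (norm a)\<^sup>2 + v * (norm b)\<^sup>2 - (norm (u *\<^sub>R a + v *\<^sub>R b))\<^sup>2 = u * v * (norm (a - b))\<^sup>2"
proof -
  have v: "v = 1 - u" using assms by simp
  show ?thesis unfolding v power2_norm_eq_inner
    by (simp add: inner_add inner_diff inner_commute algebra_simps power2_eq_square)
qed

lemma concave_on_power2_norm_diff:
  fixes x :: "'a::real_inner" and c d :: real
  assumes "c \<le> d"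
  shows "concave_on UNIV (\<lambda>z. c * (norm z)\<^sup>2 - d * (norm (z - x))\<^sup>2)"
    (is "concave_on UNIV ?q")
  unfolding concave_on_iff
proof (intro conjI convex_UNIV ballI allI impI)
  fix a b :: 'a and u v :: real
  assume "u \<ge> 0" "v \<ge> 0" and uv: "u + v = 1"
  have "u *\<^sub>R a + v *\<^sub>R b - x = u *\<^sub>R (a - x) + v *\<^sub>R (b - x)"
    using uv by (simp add: algebra_simps flip: scaleR_add_left)
  then have combination_shifted:
    "u * (norm (a - x))\<^sup>2 + v * (norm (b - x))\<^sup>2 - (norm (u *\<^sub>R a + v *\<^sub>R b - x))\<^sup>2
      = u * v * (norm (a - b))\<^sup>2"
    using power2_norm_convex_combination[OF uv, of "a - x" "b - x"] by simp
  have "u * ?q a + v * ?q b - ?q (u *\<^sub>R a + v *\<^sub>R b)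
      = c * (u * (norm a)\<^sup>2 + v * (norm b)\<^sup>2 - (norm (u *\<^sub>R a + v *\<^sub>R b))\<^sup>2)
        - d * (u * (norm (a - x))\<^sup>2 + v * (norm (b - x))\<^sup>2 - (norm (u *\<^sub>R a + v *\<^sub>R b - x))\<^sup>2)"
    by (simp add: algebra_simps)
  also have "\<dots> = (c - d) * (u * v * (norm (a - b))\<^sup>2)"
    unfolding power2_norm_convex_combination[OF uv] combination_shifted by (simp add: algebra_simps)
  also have "\<dots> \<le> 0"
    using assms \<open>u \<ge> 0\<close> \<open>v \<ge> 0\<close> by (simp add: mult_nonpos_nonneg)
  finally show "u * ?q a + v * ?q b \<le> ?q (u *\<^sub>R a + v *\<^sub>R b)"
    by simp
qed

lemma concave_on_compose_linear:
  assumes "concave_on T q" and "linear h" and "convex S" and "h ` S \<subseteq> T"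
  shows "concave_on S (\<lambda>x. q (h x))"
  using assms unfolding concave_on_iff
  by (auto simp: linear_add linear_scale image_subset_iff)

lemma concave_on_cong:
  assumes "\<And>x. x \<in> S \<Longrightarrow> f x = g x"
  shows "concave_on S f \<longleftrightarrow> concave_on S g"
  using assms unfolding concave_on_iff convex_def by auto

lemma convex_combination_SUP_le:
  fixes h k :: "'a \<Rightarrow> real"
  assumes "U \<noteq> {}" and "bdd_above (h ` U)" and "bdd_above (k ` U)"
    and "u \<ge> 0" and "v \<ge> 0" and "u + v = 1"
    and bound: "\<And>z1 z2. z1 \<in> U \<Longrightarrow> z2 \<in> U \<Longrightarrow> u * h z1 + v * k z2 \<le> R"
  shows "u * (SUP z\<in>U. h z) + v * (SUP z\<in>U. k z) \<le> R"
proof (rule field_le_epsilon)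
  fix e :: real
  assume "e > 0"
  obtain z1 where "z1 \<in> U" "(SUP z\<in>U. h z) - e < h z1"
    using less_cSUP_iff[OF assms(1,2), of "(SUP z\<in>U. h z) - e"] \<open>e > 0\<close> by auto
  obtain z2 where "z2 \<in> U" "(SUP z\<in>U. k z) - e < k z2"
    using less_cSUP_iff[OF assms(1,3), of "(SUP z\<in>U. k z) - e"] \<open>e > 0\<close> by auto
  have "u * ((SUP z\<in>U. h z) - e) + v * ((SUP z\<in>U. k z) - e) \<le> u * h z1 + v * k z2"
    using assms(4,5) \<open>(SUP z\<in>U. h z) - e < h z1\<close> \<open>(SUP z\<in>U. k z) - e < k z2\<close>
    by (intro add_mono mult_left_mono) auto
  moreover have "u * ((SUP z\<in>U. h z) - e) + v * ((SUP z\<in>U. k z) - e)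
      = u * (SUP z\<in>U. h z) + v * (SUP z\<in>U. k z) - e"
    using \<open>u + v = 1\<close> by (simp add: algebra_simps flip: distrib_left)
  ultimately show "u * (SUP z\<in>U. h z) + v * (SUP z\<in>U. k z) \<le> R + e"
    using bound[OF \<open>z1 \<in> U\<close> \<open>z2 \<in> U\<close>] by linarith
qed

lemma concave_on_SUP_fst:
  fixes g :: "'a::real_vector \<times> 'b::real_vector \<Rightarrow> real"
  assumes conc: "concave_on (U \<times> V) g" and "U \<noteq> {}"
    and bdd: "\<And>y. y \<in> V \<Longrightarrow> bdd_above ((\<lambda>z. g (z, y)) ` U)"
  shows "concave_on V (\<lambda>y. SUP z\<in>U. g (z, y))"
proof -
  have "convex (U \<times> V)"
    using conc by (rule concave_on_imp_convex)
  moreover have "V = snd ` (U \<times> V)"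
    using \<open>U \<noteq> {}\<close> by force
  ultimately have "convex V"
    by (metis convex_linear_image linear_snd)
  show ?thesis unfolding concave_on_iff
  proof (intro conjI \<open>convex V\<close> ballI allI impI)
    fix y1 y2 and u v :: real
    assume y: "y1 \<in> V" "y2 \<in> V" and uv: "u \<ge> 0" "v \<ge> 0" "u + v = 1"
    have "u *\<^sub>R y1 + v *\<^sub>R y2 \<in> V"
      using \<open>convex V\<close> y uv unfolding convex_def by blast
    show "u * (SUP z\<in>U. g (z, y1)) + v * (SUP z\<in>U. g (z, y2)) \<le> (SUP z\<in>U. g (z, u *\<^sub>R y1 + v *\<^sub>R y2))"
    proof (rule convex_combination_SUP_le[OF \<open>U \<noteq> {}\<close> bdd[OF \<open>y1 \<in> V\<close>] bdd[OF \<open>y2 \<in> V\<close>] uv])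
      fix z1 z2 assume "z1 \<in> U" "z2 \<in> U"
      then have in_UV: "(z1, y1) \<in> U \<times> V" "(z2, y2) \<in> U \<times> V"
        using y by auto
      then have "u *\<^sub>R (z1, y1) + v *\<^sub>R (z2, y2) \<in> U \<times> V"
        using \<open>convex (U \<times> V)\<close> uv unfolding convex_def by blast
      then have "u *\<^sub>R z1 + v *\<^sub>R z2 \<in> U"
        by simp
      have "u * g (z1, y1) + v * g (z2, y2) \<le> g (u *\<^sub>R (z1, y1) + v *\<^sub>R (z2, y2))"
        using conc in_UV uv unfolding concave_on_iff by blast
      also have "\<dots> = g (u *\<^sub>R z1 + v *\<^sub>R z2, u *\<^sub>R y1 + v *\<^sub>R y2)"
        by simp
      also have "\<dots> \<le> (SUP z\<in>U. g (z, u *\<^sub>R y1 + v *\<^sub>R y2))"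
        using bdd[OF \<open>u *\<^sub>R y1 + v *\<^sub>R y2 \<in> V\<close>] \<open>u *\<^sub>R z1 + v *\<^sub>R z2 \<in> U\<close> by (rule cSUP_upper2) simp
      finally show "u * g (z1, y1) + v * g (z2, y2) \<le> (SUP z\<in>U. g (z, u *\<^sub>R y1 + v *\<^sub>R y2))" .
    qed
  qed
qed

lemma concave_on_sup_conv_fst_terms:
  fixes f :: "'a::real_inner \<times> 'b::real_inner \<Rightarrow> real"
  assumes semiconcave: "concave_on (U \<times> V) (\<lambda>(z, y). f (z, y) - \<kappa> / 2 * ((norm z)\<^sup>2 + (norm y)\<^sup>2))"
    and "0 < \<epsilon>" and "\<kappa> * \<epsilon> \<le> 1"
  shows "concave_on (U \<times> V) (\<lambda>(z, y). - \<kappa> / 2 * (norm y)\<^sup>2 + (f (z, y) - (norm (z - x))\<^sup>2 / (2 * \<epsilon>)))"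
proof -
  have "\<kappa> / 2 \<le> 1 / (2 * \<epsilon>)"
    using assms(2,3) by (simp add: field_simps)
  then have "concave_on (U \<times> V) (\<lambda>p. \<kappa> / 2 * (norm (fst p))\<^sup>2 - 1 / (2 * \<epsilon>) * (norm (fst p - x))\<^sup>2)"
    using concave_on_imp_convex[OF semiconcave]
    by (intro concave_on_compose_linear[OF concave_on_power2_norm_diff linear_fst]) auto
  from concave_on_add[OF semiconcave this] show ?thesis
    by (rule rev_iffD1[OF _ concave_on_cong]) (auto simp: field_simps)
qed

lemma bdd_above_sup_conv_fst_terms:
  assumes "bounded (f ` (U \<times> V))" and "0 < \<epsilon>" and "y \<in> V"
  shows "bdd_above ((\<lambda>z. f (z, y) - (norm (z - x))\<^sup>2 / (2 * \<epsilon>)) ` U)"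
proof -
  obtain B where B: "\<And>p. p \<in> U \<times> V \<Longrightarrow> \<bar>f p\<bar> \<le> B"
    using assms(1) unfolding bounded_iff by auto
  show ?thesis
  proof (rule bdd_aboveI2)
    fix z assume "z \<in> U"
    then have "f (z, y) \<le> B"
      using B[of "(z, y)"] \<open>y \<in> V\<close> by auto
    moreover have "(norm (z - x))\<^sup>2 / (2 * \<epsilon>) \<ge> 0"
      using \<open>0 < \<epsilon>\<close> by simp
    ultimately show "f (z, y) - (norm (z - x))\<^sup>2 / (2 * \<epsilon>) \<le> B"
      by linarith
  qed
qed

theorem lemma4p3:
  fixes U :: "(real ^ 'n) set" and V :: "(real ^ 'm) set"
    and f :: "(real ^ 'n) \<times> (real ^ 'm) \<Rightarrow> real"
    and \<kappa> \<epsilon> :: real and x :: "real ^ 'n"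
  assumes "open U" and "open V"
    and "upper_semicontinuous_on (U \<times> V) f"
    and "bounded (f ` (U \<times> V))"
    and "\<kappa> > 0"
    and "concave_on (U \<times> V) (\<lambda>(x, y). f (x, y) - \<kappa> / 2 * ((norm x)\<^sup>2 + (norm y)\<^sup>2))"
    and "0 < \<epsilon>" and "\<epsilon> < 1 / \<kappa>"
    and "x \<in> U"
  shows "concave_on V (\<lambda>y. sup_conv_fst \<epsilon> U f x y - \<kappa> / 2 * (norm y)\<^sup>2)"
proof -
  define g where "g = (\<lambda>(z, y). - \<kappa> / 2 * (norm y)\<^sup>2 + (f (z, y) - (norm (z - x))\<^sup>2 / (2 * \<epsilon>)))"
  have "\<kappa> * \<epsilon> \<le> 1"
    using assms(5,8) by (simp add: field_simps)
  then have "concave_on (U \<times> V) g"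
    unfolding g_def by (rule concave_on_sup_conv_fst_terms[OF assms(6,7)])
  note bdd = bdd_above_sup_conv_fst_terms[OF assms(4,7)]
  have "bdd_above ((\<lambda>z. g (z, y)) ` U)" if "y \<in> V" for y
    using bdd_above_image_mono[OF mono_add bdd[OF that], of "- \<kappa> / 2 * (norm y)\<^sup>2"]
    unfolding g_def image_image case_prod_conv .
  with \<open>concave_on (U \<times> V) g\<close> have concave_SUP: "concave_on V (\<lambda>y. SUP z\<in>U. g (z, y))"
    using assms(9) by (intro concave_on_SUP_fst) auto
  have SUP_eq: "(SUP z\<in>U. g (z, y)) = sup_conv_fst \<epsilon> U f x y - \<kappa> / 2 * (norm y)\<^sup>2" if "y \<in> V" for y
  proof -
    have "(SUP z\<in>U. g (z, y)) = - \<kappa> / 2 * (norm y)\<^sup>2 + (SUP z\<in>U. f (z, y) - (norm (z - x))\<^sup>2 / (2 * \<epsilon>))"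
      unfolding g_def case_prod_conv using assms(9) by (intro Sup_add_eq[OF bdd[OF that]]) auto
    then show ?thesis
      by (simp add: sup_conv_fst_def)
  qed
  from concave_SUP show ?thesis
    by (rule rev_iffD1[OF _ concave_on_cong[OF SUP_eq]])
qed

end
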